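(* Let $\xi\ge 1$ be a real constant, let $e_b>0$, and let $\mathcal A\subseteq[0,e_b]$ be the range of admissible values of a parameter $a$. For $a\in\mathcal A$ consider the initial triple $(p_X,p_Y,p_Z)=(e_b-a,\;a,\;\xi e_b-a)$. Fix a finite sequence of B steps and P steps whose first step is a B step, and let $(p_X',p_Y',p_Z')$ be the triple obtained by applying this sequence to the initial triple. Define the key generation rate $$R(a)=1-H_2(p_X'+p_Y')-H_2(p_Z'+p_Y').$$ Suppose (i) $e_b<\frac{1+4a}{2(1+\xi)}$ for all $a\in\mathcal A$, and (ii) $e_b<\frac{1}{2\xi}$. Then, for fixed $e_b$ and fixed sequence, $R(a)$ is an increasing function of $a$ on $\mathcal A$.
   Context: $H_2(p)=-p\log_2 p-(1-p)\log_2(1-p)$ is the binary entropy. A B step maps a triple $(p_X,p_Y,p_Z)$ to $(p_X',p_Y',p_Z')$ with $p_X'=(p_X^2+p_Y^2)/p_S$, $p_Y'=2p_Xp_Y/p_S$, $p_Z'=2(1-p_X-p_Y-p_Z)p_Z/p_S$, where $p_S=1-2(p_X+p_Y)(1-p_X-p_Y)$. A P step maps $(p_X,p_Y,p_Z)$, with $p_I=1-p_X-p_Y-p_Z$, to $p_X'=3p_I^2(p_X+p_Y)+6p_Ip_Xp_Z+3p_X^2p_Y+p_X^3$, $p_Y'=6p_Ip_Yp_Z+3p_X(p_Y^2+p_Z^2)+3p_Yp_Z^2+p_Y^3$, $p_Z'=3p_I(p_Y^2+p_Z^2)+6p_Xp_Yp_Z+3p_Y^2p_Z+p_Z^3$.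 (Here $p_X,p_Y,p_Z$ are the probabilities of bit-flip, bit-and-phase-flip, and phase-flip errors of noisy EPR pairs.) *)

theory Defs
  imports Complex_Main
begin

definition H2 :: "real \<Rightarrow> real" where
  "H2 p = - p * log 2 p - (1 - p) * log 2 (1 - p)"

datatype step = BStep | PStep

definition B_step :: "real \<times> real \<times> real \<Rightarrow> real \<times> real \<times> real" where
  "B_step t = (case t of (pX, pY, pZ) \<Rightarrow>
     (let pS = 1 - 2 * (pX + pY) * (1 - pX - pY)
      in ((pX^2 + pY^2) / pS, 2 * pX * pY / pS, 2 * (1 - pX - pY - pZ) * pZ / pS)))"

definition P_step :: "real \<times> real \<times> real \<Rightarrow> real \<times> real \<times> real" where
  "P_step t = (case t of (pX, pY, pZ) \<Rightarrow>
     (let pI = 1 - pX - pY - pZ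
      in (3 * pI^2 * (pX + pY) + 6 * pI * pX * pZ + 3 * pX^2 * pY + pX^3,
          6 * pI * pY * pZ + 3 * pX * (pY^2 + pZ^2) + 3 * pY * pZ^2 + pY^3,
          3 * pI * (pY^2 + pZ^2) + 6 * pX * pY * pZ + 3 * pY^2 * pZ + pZ^3)))"

definition apply_step :: "step \<Rightarrow> real \<times> real \<times> real \<Rightarrow> real \<times> real \<times> real" where
  "apply_step s = (case s of BStep \<Rightarrow> B_step | PStep \<Rightarrow> P_step)"

definition apply_steps :: "step list \<Rightarrow> real \<times> real \<times> real \<Rightarrow> real \<times> real \<times> real" where
  "apply_steps ss t = fold apply_step ss t"

definition key_rate :: "real \<Rightarrow> real \<Rightarrow> step list \<Rightarrow> real \<Rightarrow> real" where
  "key_rate \<xi> eb ss a = (case apply_steps ss (eb - a, a, \<xi> * eb - a) of (pX', pY', pZ') \<Rightarrow>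
      1 - H2 (pX' + pY') - H2 (pZ' + pY'))"

end

theory Submission
  imports Defs
begin

text \<open>In the Pauli correlations \<open>c\<^sub>X = 1 - 2(p\<^sub>Y + p\<^sub>Z)\<close>, \<open>c\<^sub>Y = 1 - 2(p\<^sub>X + p\<^sub>Z)\<close>,
  \<open>c\<^sub>Z = 1 - 2(p\<^sub>X + p\<^sub>Y)\<close> the B step becomes
  \<open>(c\<^sub>X\<^sup>2 + c\<^sub>Y\<^sup>2, 2c\<^sub>Xc\<^sub>Y, 2c\<^sub>Z) / (1 + c\<^sub>Z\<^sup>2)\<close>, the P step acts componentwise by
  odd cubics, and the key rate is \<open>1 - H\<^sub>2((1 - c\<^sub>Z)/2) - H\<^sub>2((1 - c\<^sub>X)/2)\<close>.
  Initially only \<open>c\<^sub>Y\<close> depends on \<open>a\<close>, and it increases with \<open>a\<close>; after the first B step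
  \<open>c\<^sub>Z\<close> is still independent of \<open>a\<close> while \<open>c\<^sub>X\<close> increases strictly and \<open>c\<^sub>Y\<close> weakly.
  Both maps preserve this comparison inside the region \<open>0 < c\<^sub>Y \<le> c\<^sub>Z \<le> 1\<close>, \<open>0 < c\<^sub>X \<le> 1\<close>, and
  \<open>H\<^sub>2\<close> is increasing on \<open>[0, 1/2)\<close>, so the rate increases.\<close>

fun correlations :: "real \<times> real \<times> real \<Rightarrow> real \<times> real \<times> real" where
  "correlations (pX, pY, pZ) = (1 - 2 * (pY + pZ), 1 - 2 * (pX + pZ), 1 - 2 * (pX + pY))"

fun B_corr :: "real \<times> real \<times> real \<Rightarrow> real \<times> real \<times> real" where
  "B_corr (x, y, z) = ((x^2 + y^2) / (1 + z^2), 2 * x * y / (1 + z^2), 2 * z / (1 + z^2))"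

fun P_corr :: "real \<times> real \<times> real \<Rightarrow> real \<times> real \<times> real" where
  "P_corr (x, y, z) = (x * (3 - x^2) / 2, y * (3 * z^2 - y^2) / 2, z^3)"

lemma correlations_B_step: "correlations (B_step t) = B_corr (correlations t)"
proof -
  obtain x y z where t: "t = (x, y, z)" by (cases t) auto
  define S where "S = 1 - 2 * (x + y) * (1 - x - y)"
  have B: "B_step (x, y, z) = ((x^2 + y^2) / S, 2 * x * y / S, 2 * (1 - x - y - z) * z / S)"
    by (simp add: B_step_def S_def Let_def)
  have S: "1 + (1 - 2 * (x + y))^2 = 2 * S"
    unfolding S_def by (simp add: power2_eq_square algebra_simps)
  then have "S \<noteq> 0" by (smt (verit) zero_le_power2)
  then have frac: "1 - 2 * (a / S + b / S) = (2 * S - 4 * (a + b)) / (2 * S)" for a b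
    by (simp add: field_simps)
  have numerators:
    "2 * S - 4 * (2 * x * y + 2 * (1 - x - y - z) * z) = (1 - 2 * (y + z))^2 + (1 - 2 * (x + z))^2"
    "2 * S - 4 * ((x^2 + y^2) + 2 * (1 - x - y - z) * z) = 2 * (1 - 2 * (y + z)) * (1 - 2 * (x + z))"
    "2 * S - 4 * ((x^2 + y^2) + 2 * x * y) = 2 * (1 - 2 * (x + y))"
    unfolding S_def by (simp_all add: power2_eq_square algebra_simps)
  show ?thesis
    unfolding t B correlations.simps B_corr.simps S frac by (simp only: numerators)
qed

lemma correlations_P_step: "correlations (P_step t) = P_corr (correlations t)"
  by (cases t) (simp add: P_step_def Let_def power2_eq_square power3_eq_cube algebra_simps)

fun apply_corr :: "step \<Rightarrow> real \<times> real \<times> real \<Rightarrow> real \<times> real \<times> real" where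
  "apply_corr BStep = B_corr"
| "apply_corr PStep = P_corr"

lemma correlations_apply_steps:
  "correlations (apply_steps ss t) = fold apply_corr ss (correlations t)"
  unfolding apply_steps_def
proof (induction ss arbitrary: t)
  case (Cons s ss)
  then show ?case
    by (cases s) (simp_all add: apply_step_def correlations_B_step correlations_P_step)
qed simp

fun rate_of_corr :: "real \<times> real \<times> real \<Rightarrow> real" where
  "rate_of_corr (x, y, z) = 1 - H2 ((1 - z) / 2) - H2 ((1 - x) / 2)"

lemma key_rate_eq_rate_of_corr:
  "key_rate \<xi> eb ss a = rate_of_corr (fold apply_corr ss (correlations (eb - a, a, \<xi> * eb - a)))"
  unfolding key_rate_def correlations_apply_steps[symmetric]
  by (cases "apply_steps ss (eb - a, a, \<xi> * eb - a)") (simp add: add_divide_distrib add.commute)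

lemma H2_has_real_derivative:
  assumes "0 < p" "p < 1"
  shows "(H2 has_real_derivative (ln (1 - p) - ln p) / ln 2) (at p)"
proof -
  have H2_ln: "H2 = (\<lambda>p. - p * (ln p / ln 2) - (1 - p) * (ln (1 - p) / ln 2))"
    by (simp add: fun_eq_iff H2_def log_def)
  show ?thesis
    unfolding H2_ln using assms by (auto intro!: derivative_eq_intros)
      (simp add: algebra_simps diff_divide_distrib add_divide_distrib)
qed

lemma H2_pos:
  assumes "0 < p" "p < 1"
  shows "0 < H2 p"
proof -
  have "log 2 p < 0" "log 2 (1 - p) < 0"
    using assms by simp_all
  then have "0 < - p * log 2 p" "0 < - (1 - p) * log 2 (1 - p)"
    using assms by (simp_all add: mult_pos_neg mult_neg_neg)
  then show ?thesis
    unfolding H2_def by linarith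
qed

lemma H2_strict_mono_on: "strict_mono_on {0..<1/2} H2"
proof (rule strict_mono_onI)
  fix p q :: real
  assume "p \<in> {0..<1/2}" "q \<in> {0..<1/2}" "p < q"
  then have pq: "0 \<le> p" "p < q" "q < 1/2" by auto
  show "H2 p < H2 q"
  proof (cases "p = 0")
    case True
    then show ?thesis using H2_pos[of q] pq by (simp add: H2_def)
  next
    case False
    show ?thesis
    proof (rule DERIV_pos_imp_increasing[OF \<open>p < q\<close>])
      fix r assume "p \<le> r" "r \<le> q"
      then have "0 < r" "r < 1" "ln r < ln (1 - r)"
        using pq False by auto
      then show "\<exists>D. DERIV H2 r :> D \<and> 0 < D"
        using H2_has_real_derivative by (intro exI[of _ "(ln (1 - r) - ln r) / ln 2"]) simp
    qed
  qed
qed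

fun corr_less :: "real \<times> real \<times> real \<Rightarrow> real \<times> real \<times> real \<Rightarrow> bool" where
  "corr_less (x1, y1, z1) (x2, y2, z2) \<longleftrightarrow>
     z1 = z2 \<and> 0 < z1 \<and> z1 \<le> 1 \<and> 0 < x1 \<and> x1 < x2 \<and> x2 \<le> 1 \<and> 0 < y1 \<and> y1 \<le> y2 \<and> y2 \<le> z1"

lemma rate_of_corr_less:
  assumes "corr_less c1 c2"
  shows "rate_of_corr c1 < rate_of_corr c2"
proof -
  obtain x1 y1 z1 x2 y2 z2 where c: "c1 = (x1, y1, z1)" "c2 = (x2, y2, z2)"
    by (cases c1, cases c2) auto
  with assms have "z1 = z2" "0 < x1" "x1 < x2" "x2 \<le> 1" by auto
  then have "H2 ((1 - x2) / 2) < H2 ((1 - x1) / 2)"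
    by (intro strict_mono_onD[OF H2_strict_mono_on]) auto
  then show ?thesis
    unfolding c \<open>z1 = z2\<close> by simp
qed

lemma P_component_strict_mono:
  fixes u v z :: real
  assumes "0 \<le> u" "u < v" "v \<le> z"
  shows "u * (3 * z^2 - u^2) < v * (3 * z^2 - v^2)"
proof -
  have "u^2 + u * v + v^2 < 3 * z^2"
    using assms by (smt (verit) mult_strict_mono power2_eq_square mult_mono)
  then have "0 < (v - u) * (3 * z^2 - u^2 - u * v - v^2)"
    using assms by simp
  then show ?thesis
    by (simp add: power2_eq_square algebra_simps)
qed

lemma P_component_le:
  fixes v z :: real
  assumes "0 \<le> v" "v \<le> z"
  shows "v * (3 * z^2 - v^2) \<le> 2 * z^3"
proof -
  have "0 \<le> (z - v)^2 * (2 * z + v)"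
    using assms by simp
  then show ?thesis
    by (simp add: power2_eq_square power3_eq_cube algebra_simps)
qed

lemma corr_less_P_corr:
  assumes "corr_less c1 c2"
  shows "corr_less (P_corr c1) (P_corr c2)"
proof -
  obtain x1 y1 z x2 y2 where c: "c1 = (x1, y1, z)" "c2 = (x2, y2, z)"
    using assms by (cases c1, cases c2) auto
  with assms have h: "0 < z" "z \<le> 1" "0 < x1" "x1 < x2" "x2 \<le> 1" "0 < y1" "y1 \<le> y2" "y2 \<le> z"
    by auto
  have "0 < x1 * (3 - x1^2)" "x1 * (3 - x1^2) < x2 * (3 - x2^2)" "x2 * (3 - x2^2) \<le> 2"
    using P_component_strict_mono[of 0 x1 1] P_component_strict_mono[of x1 x2 1]
      P_component_le[of x2 1] h
    by simp_all
  moreover have "0 < y1 * (3 * z^2 - y1^2)" "y2 * (3 * z^2 - y2^2) \<le> 2 * z^3"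
    using P_component_strict_mono[of 0 y1 z] P_component_le[of y2 z] h by simp_all
  moreover have "y1 * (3 * z^2 - y1^2) \<le> y2 * (3 * z^2 - y2^2)"
    using P_component_strict_mono[of y1 y2 z] h by (cases "y1 = y2") simp_all
  ultimately show ?thesis
    using h unfolding c by (simp add: power_le_one)
qed

lemma corr_less_B_corr:
  fixes x1 y1 x2 y2 z :: real
  assumes "0 < z" "z \<le> 1" "0 < x1" "x1 \<le> x2" "0 < y1" "y1 \<le> y2" "x1 < x2 \<or> y1 < y2"
    and "x2^2 + y2^2 \<le> 1 + z^2" "x2 * y2 \<le> z"
  shows "corr_less (B_corr (x1, y1, z)) (B_corr (x2, y2, z))"
proof -
  define D where "D = 1 + z^2"
  have "0 < D"
    unfolding D_def by (simp add: add_pos_nonneg)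
  moreover have "2 * z \<le> D"
    unfolding D_def using zero_le_power2[of "1 - z"] by (simp add: power2_eq_square algebra_simps)
  moreover have "x1^2 \<le> x2^2" "y1^2 \<le> y2^2" "x1^2 < x2^2 \<or> y1^2 < y2^2"
    using assms by (auto intro: power_strict_mono power_mono)
  then have "x1^2 + y1^2 < x2^2 + y2^2"
    by linarith
  moreover have "x1 * y1 \<le> x2 * y2"
    using assms by (simp add: mult_mono)
  ultimately show ?thesis
    using assms unfolding B_corr.simps corr_less.simps D_def[symmetric]
    by (simp add: add_pos_pos divide_strict_right_mono divide_right_mono divide_le_eq)
qed

lemma corr_less_B_corr_of_corr_less:
  assumes "corr_less c1 c2"
  shows "corr_less (B_corr c1) (B_corr c2)"
proof -
  obtain x1 y1 z x2 y2 where c: "c1 = (x1, y1, z)" "c2 = (x2, y2, z)"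
    using assms by (cases c1, cases c2) auto
  with assms have h: "0 < z" "z \<le> 1" "0 < x1" "x1 < x2" "x2 \<le> 1" "0 < y1" "y1 \<le> y2" "y2 \<le> z"
    by auto
  then have "x2^2 + y2^2 \<le> 1 + z^2" "x2 * y2 \<le> z"
    using mult_mono[of x2 1 y2 z] by (simp_all add: power_le_one power_mono add_mono)
  with h show ?thesis
    unfolding c by (intro corr_less_B_corr) auto
qed

lemma corr_less_fold_apply_corr:
  "corr_less c1 c2 \<Longrightarrow> corr_less (fold apply_corr ss c1) (fold apply_corr ss c2)"
proof (induction ss arbitrary: c1 c2)
  case (Cons s ss)
  then have "corr_less (apply_corr s c1) (apply_corr s c2)"
    by (cases s) (simp_all add: corr_less_B_corr_of_corr_less corr_less_P_corr)
  then show ?case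
    using Cons.IH by simp
qed simp

lemma corr_less_B_corr_initial:
  fixes \<xi> eb a1 a2 :: real
  assumes "\<xi> \<ge> 1" "0 \<le> a1" "a1 < a2" "a2 \<le> eb"
    and "eb < (1 + 4 * a1) / (2 * (1 + \<xi>))" "eb < 1 / (2 * \<xi>)"
  shows "corr_less (B_corr (correlations (eb - a1, a1, \<xi> * eb - a1)))
                   (B_corr (correlations (eb - a2, a2, \<xi> * eb - a2)))"
proof -
  \<comment> \<open>Hypothesis (i) at \<open>a1\<close> says \<open>0 < y1\<close>, and (ii) says \<open>0 < x\<close>.\<close>
  define u where "u = \<xi> * eb"
  define x where "x = 1 - 2 * u"
  define z where "z = 1 - 2 * eb"
  define y1 where "y1 = 1 - 2 * eb - 2 * u + 4 * a1"
  define y2 where "y2 = 1 - 2 * eb - 2 * u + 4 * a2"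
  have "eb \<le> u" "2 * u < 1" "0 < y1"
    using assms mult_right_mono[of 1 \<xi> eb]
    by (simp_all add: u_def y1_def field_simps)
  then have h: "0 < x" "0 < z" "z \<le> 1" "y1 < y2" "0 \<le> u - a2" "0 \<le> 1 - eb - u + a2"
    using assms by (auto simp: x_def z_def y2_def y1_def)
  have "1 + z^2 - x^2 - y2^2 = 8 * ((1 - eb - u + a2) * (u - a2) + (eb - a2) * a2)"
    by (simp add: x_def z_def y2_def power2_eq_square algebra_simps)
  also have "\<dots> \<ge> 0"
    using h assms by simp
  finally have "x^2 + y2^2 \<le> 1 + z^2"
    by simp
  have "z - x * y2 = (2 - 2 * u) * (2 * u - 2 * eb) + x * (4 * eb - 4 * a2)"
    by (simp add: x_def z_def y2_def algebra_simps)
  moreover have "0 \<le> (2 - 2 * u) * (2 * u - 2 * eb)" "0 \<le> x * (4 * eb - 4 * a2)"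
    using h \<open>eb \<le> u\<close> \<open>2 * u < 1\<close> assms by simp_all
  ultimately have "x * y2 \<le> z"
    by linarith
  have "correlations (eb - a1, a1, \<xi> * eb - a1) = (x, y1, z)"
    "correlations (eb - a2, a2, \<xi> * eb - a2) = (x, y2, z)"
    by (simp_all add: x_def y1_def y2_def z_def u_def)
  then show ?thesis
    using h \<open>0 < y1\<close> \<open>x^2 + y2^2 \<le> 1 + z^2\<close> \<open>x * y2 \<le> z\<close>
    by (simp only:) (rule corr_less_B_corr; auto)
qed

theorem theorem3:
  fixes \<xi> eb :: real and A :: "real set" and ss :: "step list"
  assumes "\<xi> \<ge> 1" and "eb > 0" and "A \<subseteq> {0..eb}"
    and "ss \<noteq> []" and "hd ss = BStep"
    and "\<forall>a\<in>A. eb < (1 + 4 * a) / (2 * (1 + \<xi>))"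
    and "eb < 1 / (2 * \<xi>)"
  shows "strict_mono_on A (key_rate \<xi> eb ss)"
proof (rule strict_mono_onI)
  fix a1 a2 assume "a1 \<in> A" "a2 \<in> A" "a1 < a2"
  obtain ss' where ss: "ss = BStep # ss'"
    using assms(4,5) by (cases ss) auto
  have "corr_less (B_corr (correlations (eb - a1, a1, \<xi> * eb - a1)))
                  (B_corr (correlations (eb - a2, a2, \<xi> * eb - a2)))"
    using \<open>a1 \<in> A\<close> \<open>a2 \<in> A\<close> \<open>a1 < a2\<close> assms by (intro corr_less_B_corr_initial) auto
  then have "corr_less (fold apply_corr ss (correlations (eb - a1, a1, \<xi> * eb - a1)))
                       (fold apply_corr ss (correlations (eb - a2, a2, \<xi> * eb - a2)))"
    unfolding ss by (simp add: corr_less_fold_apply_corr)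
  then show "key_rate \<xi> eb ss a1 < key_rate \<xi> eb ss a2"
    unfolding key_rate_eq_rate_of_corr by (rule rate_of_corr_less)
qed

end
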